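(* (Manipulation Resistance.) In the ASAS-BridgeAMM protocol described in the context, an adversary $\mathcal{A}$ controlling the relayer and manipulating the oracle price by a relative amount $\delta$ can extract profit $\Pi_{\mathcal{A}}$ bounded by $\Pi_{\mathcal{A}} \le \delta\cdot V_{swap} + s_{\max}\cdot V_{pool}$.
   Context: ASAS-BridgeAMM is a cross-chain bridge whose destination-chain settlement is a constant-product AMM with reserve $x$ of the input asset. A Byzantine relayer may delay, reorder, censor or front-run cross-chain messages (but cannot forge consensus signatures). The adversary's actions are: manipulate the oracle price by relative amount $\delta$, delay a message by latency $\tau$, and execute a swap of size $V$ (denoted $V_{swap}$). The adversary's profit is $\Pi(\delta,\tau,V)=\delta V - s(V)V - h(\tau)V$, where $s(V)=V/(x+V)$ is the slippage and $h(\tau)\in[h_{\min},h_{\max}]$ is the latency-dependent haircut ($h(\tau)=h_{\min}$ for $\tau\le T_{\min}$, linear between $T_{\min}$ and $T_{\max}$, $h_{\max}$ for $\tau\ge T_{\max}$; implementation $h_{\min}=0.3\%$, $h_{\max}=5\%$, $T_{\max}=\tau_{\max}=30$ min). Swaps revert if slippage exceeds the maximum slippage bound $s_{\max}$ (implementation: $10\%$). A circuit breaker halts the protocol (swap reverts, profit $0$) if the price deviation $\delta\ge\theta_{price}=0.5$ or the latency $\tau>2\tau_{\max}$. $V_{pool}$ denotes the pool value. *)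

theory Defs
  imports Complex_Main
begin

text \<open>Slippage of a swap of size V against a constant-product pool with input reserve x.\<close>
definition slippage :: "real \<Rightarrow> real \<Rightarrow> real" where
  "slippage x V = V / (x + V)"

definition haircut :: "real \<Rightarrow> real \<Rightarrow> real \<Rightarrow> real \<Rightarrow> real \<Rightarrow> real" where
  "haircut h_min h_max T_min T_max \<tau> =
     (if \<tau> \<le> T_min then h_min
      else if \<tau> \<ge> T_max then h_max
      else h_min + (h_max - h_min) * (\<tau> - T_min) / (T_max - T_min))"

text \<open>Realised adversary profit in the protocol: 0 if the circuit breaker fires
  (delta >= theta_price or tau > 2 tau_max) or the swap reverts on slippage
  (s(V) > s_max); otherwise delta V - s(V) V - h(tau) V.\<close>
definition adv_profit ::
  "real \<Rightarrow> real \<Rightarrow> real \<Rightarrow> real \<Rightarrow> real \<Rightarrow> real \<Rightarrow> real \<Rightarrow> real \<Rightarrow> real \<Rightarrow> real \<Rightarrow> real \<Rightarrow> real" where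
  "adv_profit x s_max \<theta>_price \<tau>_max h_min h_max T_min T_max \<delta> \<tau> V =
     (if \<delta> \<ge> \<theta>_price \<or> \<tau> > 2 * \<tau>_max then 0
      else if slippage x V > s_max then 0
      else \<delta> * V - slippage x V * V - haircut h_min h_max T_min T_max \<tau> * V)"

end

theory Submission
  imports Defs
begin

(* Slippage and haircut are nonnegative costs, so an executed swap earns at most the
   manipulation gain delta V, and a halted or reverted one earns 0 <= delta V.
   The term s_max V_pool is nonnegative slack. *)

lemma slippage_nonneg:
  assumes "0 \<le> x" "0 \<le> V"
  shows "0 \<le> slippage x V"
  using assms unfolding slippage_def by simp

(* No hypothesis on T_min, T_max is needed: the interpolating branch is reached only when T_min < T_max. *)
lemma haircut_ge_min:
  assumes "h_min \<le> h_max"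
  shows "h_min \<le> haircut h_min h_max T_min T_max \<tau>"
proof -
  have "0 \<le> (h_max - h_min) * (\<tau> - T_min) / (T_max - T_min)"
    if "T_min < \<tau>" "\<tau> < T_max"
    using assms that by (intro divide_nonneg_pos mult_nonneg_nonneg) auto
  then show ?thesis
    using assms unfolding haircut_def by auto
qed

lemma adv_profit_le_manipulation_gain:
  assumes "0 \<le> x" "0 \<le> V" "0 \<le> \<delta>" "0 \<le> h_min" "h_min \<le> h_max"
  shows "adv_profit x s_max \<theta>_price \<tau>_max h_min h_max T_min T_max \<delta> \<tau> V \<le> \<delta> * V"
proof -
  have "0 \<le> slippage x V * V"
    using slippage_nonneg assms by simp
  moreover have "0 \<le> haircut h_min h_max T_min T_max \<tau> * V"
    using haircut_ge_min[of h_min h_max] assms by (simp add: order_trans)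
  ultimately show ?thesis
    using assms unfolding adv_profit_def by auto
qed

theorem theorem3:
  fixes x s_max \<theta>_price \<tau>_max h_min h_max T_min T_max \<delta> \<tau> V V_pool :: real
  assumes "x > 0" and "V \<ge> 0" and "\<tau> \<ge> 0" and "\<delta> \<ge> 0"
    and "0 \<le> h_min" and "h_min \<le> h_max" and "0 \<le> T_min" and "T_min < T_max"
    and "T_max = \<tau>_max"
    and "0 \<le> s_max" and "V_pool \<ge> 0"
  shows "adv_profit x s_max \<theta>_price \<tau>_max h_min h_max T_min T_max \<delta> \<tau> V
           \<le> \<delta> * V + s_max * V_pool"
proof -
  have "adv_profit x s_max \<theta>_price \<tau>_max h_min h_max T_min T_max \<delta> \<tau> V \<le> \<delta> * V"
    using assms by (intro adv_profit_le_manipulation_gain) auto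
  moreover have "0 \<le> s_max * V_pool"
    using assms by simp
  ultimately show ?thesis
    by linarith
qed

end
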